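(* Let $A$ be a closed type of system $\mathcal F$ not containing the type constant $O$. If $A$ is a data type, then $A$ is an output type.
   Context: $\lambda$-terms are those of the untyped $\lambda$-calculus ($\Lambda$ their set); $Fv(t)$ the free variables; $\rightarrow_\beta$ is (multi-step) $\beta$-reduction; normal means without $\beta$-redex; $u\succ_f v$ means $v$ is obtained from $u$ by weak head reduction (repeatedly reducing the redex $(\lambda x u)v$ in a term $(\lambda x u)vv_1\dots v_m$). Types of system $\mathcal F$: built from type variables and type constants (atomic, not quantifiable; $O$ is one) with $\rightarrow$, $\forall$; only proper types (in every $\forall XA$, $X$ occurs free in $A$). Typing: (ax) $\Gamma \vdash x_i : A_i$ for $x_i:A_i\in\Gamma$; ($\rightarrow_i$) from $\Gamma, x:B \vdash t : C$ infer $\Gamma \vdash \lambda x t : B \rightarrow C$; ($\rightarrow_e$) from $\Gamma \vdash u : B\rightarrow C$, $\Gamma \vdash v : B$ infer $\Gamma \vdash (u)v : C$; ($\forall_i$) from $\Gamma \vdash t : A$, $X$ not free in $\Gamma$, infer $\Gamma \vdash t : \forall X A$; ($\forall_e$) from $\Gamma \vdash t : \forall X A$ infer $\Gamma \vdash t : A[C/X]$. A set $G\subseteq\Lambda$ is saturated if $u\in G$ and $t\succ_f u$ imply $t\in G$. For $G,G'\subseteq\Lambda$, $G\rightarrow G'=\{u : (u)t\in G' \text{ for all } t\in G\}$. An interpretation $I$ maps each type variable and type constant to a saturated set; $|A|_I$ is defined by $|A\rightarrow B|_I=|A|_I\rightarrow|B|_I$ and $|\forall XA|_I=\bigcap\{|A|_{I[X\leftarrow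 G]} : G \text{ saturated}\}$, and $|A|=\bigcap_I |A|_I$. A closed type $A$ is a data type if $|A|\neq\emptyset$ and every $t\in|A|$ $\beta$-reduces to a closed term. An output type is a closed type $S$ not containing $O$ such that for every normal $t$ and variable $\alpha$, $\alpha:O\vdash_{\mathcal F}t:S$ implies $\alpha\notin Fv(t)$. *)

theory Defs
  imports Main
begin

datatype lterm = Var nat | App lterm lterm | Abs lterm

primrec lift :: "lterm \<Rightarrow> nat \<Rightarrow> lterm" where
  "lift (Var i) k = (if i < k then Var i else Var (Suc i))"
| "lift (App s t) k = App (lift s k) (lift t k)"
| "lift (Abs s) k = Abs (lift s (Suc k))"

primrec subst :: "lterm \<Rightarrow> nat \<Rightarrow> lterm \<Rightarrow> lterm" where
  "subst (Var i) k u = (if k < i then Var (i - 1) else if i = k then u else Var i)"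
| "subst (App s t) k u = App (subst s k u) (subst t k u)"
| "subst (Abs s) k u = Abs (subst s (Suc k) (lift u 0))"

primrec fv :: "lterm \<Rightarrow> nat set" where
  "fv (Var i) = {i}"
| "fv (App s t) = fv s \<union> fv t"
| "fv (Abs s) = {n. Suc n \<in> fv s}"

definition closed_term :: "lterm \<Rightarrow> bool" where
  "closed_term t \<longleftrightarrow> fv t = {}"

inductive beta1 :: "lterm \<Rightarrow> lterm \<Rightarrow> bool" where
  beta: "beta1 (App (Abs s) t) (subst s 0 t)"
| appL: "beta1 s s' \<Longrightarrow> beta1 (App s t) (App s' t)"
| appR: "beta1 t t' \<Longrightarrow> beta1 (App s t) (App s t')"
| abs: "beta1 s s' \<Longrightarrow> beta1 (Abs s) (Abs s')"

definition beta_red :: "lterm \<Rightarrow> lterm \<Rightarrow> bool" where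
  "beta_red = beta1\<^sup>*\<^sup>*"

primrec normal :: "lterm \<Rightarrow> bool" where
  "normal (Var i) = True"
| "normal (App s t) = ((case s of Abs _ \<Rightarrow> False | _ \<Rightarrow> True) \<and> normal s \<and> normal t)"
| "normal (Abs s) = normal s"

inductive whead1 :: "lterm \<Rightarrow> lterm \<Rightarrow> bool" where
  head: "whead1 (App (Abs s) t) (subst s 0 t)"
| app: "whead1 s s' \<Longrightarrow> whead1 (App s t) (App s' t)"

definition whead :: "lterm \<Rightarrow> lterm \<Rightarrow> bool" where
  "whead = whead1\<^sup>*\<^sup>*"

datatype tp = TVar nat | TConst nat | Arr tp tp | All tp

definition tO :: tp where "tO = TConst 0"

primrec tlift :: "tp \<Rightarrow> nat \<Rightarrow> tp" where
  "tlift (TVar i) k = (if i < k then TVar i else TVar (Suc i))"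
| "tlift (TConst c) k = TConst c"
| "tlift (Arr A B) k = Arr (tlift A k) (tlift B k)"
| "tlift (All A) k = All (tlift A (Suc k))"

primrec tsubst :: "tp \<Rightarrow> nat \<Rightarrow> tp \<Rightarrow> tp" where
  "tsubst (TVar i) k C = (if k < i then TVar (i - 1) else if i = k then C else TVar i)"
| "tsubst (TConst c) k C = TConst c"
| "tsubst (Arr A B) k C = Arr (tsubst A k C) (tsubst B k C)"
| "tsubst (All A) k C = All (tsubst A (Suc k) (tlift C 0))"

primrec tfree :: "nat \<Rightarrow> tp \<Rightarrow> bool" where
  "tfree k (TVar i) = (i = k)"
| "tfree k (TConst c) = False"
| "tfree k (Arr A B) = (tfree k A \<or> tfree k B)"
| "tfree k (All A) = tfree (Suc k) A"

primrec proper :: "tp \<Rightarrow> bool" where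
  "proper (TVar i) = True"
| "proper (TConst c) = True"
| "proper (Arr A B) = (proper A \<and> proper B)"
| "proper (All A) = (tfree 0 A \<and> proper A)"

primrec tclosed_at :: "nat \<Rightarrow> tp \<Rightarrow> bool" where
  "tclosed_at k (TVar i) = (i < k)"
| "tclosed_at k (TConst c) = True"
| "tclosed_at k (Arr A B) = (tclosed_at k A \<and> tclosed_at k B)"
| "tclosed_at k (All A) = tclosed_at (Suc k) A"

definition tclosed :: "tp \<Rightarrow> bool" where
  "tclosed A \<longleftrightarrow> tclosed_at 0 A"

primrec has_const :: "nat \<Rightarrow> tp \<Rightarrow> bool" where
  "has_const c (TVar i) = False"
| "has_const c (TConst d) = (c = d)"
| "has_const c (Arr A B) = (has_const c A \<or> has_const c B)"
| "has_const c (All A) = has_const c A"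

definition contains_O :: "tp \<Rightarrow> bool" where
  "contains_O A \<longleftrightarrow> has_const 0 A"

inductive typing :: "tp list \<Rightarrow> lterm \<Rightarrow> tp \<Rightarrow> bool" where
  ax: "i < length \<Gamma> \<Longrightarrow> typing \<Gamma> (Var i) (\<Gamma> ! i)"
| arr_i: "proper B \<Longrightarrow> typing (B # \<Gamma>) t C \<Longrightarrow> typing \<Gamma> (Abs t) (Arr B C)"
| arr_e: "typing \<Gamma> u (Arr B C) \<Longrightarrow> typing \<Gamma> v B \<Longrightarrow> typing \<Gamma> (App u v) C"
| all_i: "typing (map (\<lambda>B. tlift B 0) \<Gamma>) t A \<Longrightarrow> tfree 0 A \<Longrightarrow> typing \<Gamma> t (All A)"
| all_e: "typing \<Gamma> t (All A) \<Longrightarrow> proper C \<Longrightarrow> typing \<Gamma> t (tsubst A 0 C)"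

definition saturated :: "lterm set \<Rightarrow> bool" where
  "saturated G \<longleftrightarrow> (\<forall>u t. u \<in> G \<longrightarrow> whead t u \<longrightarrow> t \<in> G)"

definition arrow_set :: "lterm set \<Rightarrow> lterm set \<Rightarrow> lterm set" where
  "arrow_set G G' = {u. \<forall>t\<in>G. App u t \<in> G'}"

definition is_interp :: "(nat \<Rightarrow> lterm set) \<Rightarrow> (nat \<Rightarrow> lterm set) \<Rightarrow> bool" where
  "is_interp Iv Ic \<longleftrightarrow> (\<forall>n. saturated (Iv n)) \<and> (\<forall>c. saturated (Ic c))"

primrec sem :: "(nat \<Rightarrow> lterm set) \<Rightarrow> (nat \<Rightarrow> lterm set) \<Rightarrow> tp \<Rightarrow> lterm set" where
  "sem Iv Ic (TVar i) = Iv i"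
| "sem Iv Ic (TConst c) = Ic c"
| "sem Iv Ic (Arr A B) = arrow_set (sem Iv Ic A) (sem Iv Ic B)"
| "sem Iv Ic (All A) = \<Inter>{sem (case_nat G Iv) Ic A | G. saturated G}"

definition sem_all :: "tp \<Rightarrow> lterm set" where
  "sem_all A = \<Inter>{sem Iv Ic A | Iv Ic. is_interp Iv Ic}"

definition data_type :: "tp \<Rightarrow> bool" where
  "data_type A \<longleftrightarrow> tclosed A \<and> proper A \<and> sem_all A \<noteq> {} \<and>
     (\<forall>t\<in>sem_all A. \<exists>u. beta_red t u \<and> closed_term u)"

text \<open>Output type: closed, without O, and any normal t with \<alpha>:O \<turnstile> t : S does not contain \<alpha>.
  The context [tO] has the single variable 0 (=\<alpha>).\<close>
definition output_type :: "tp \<Rightarrow> bool" where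
  "output_type S \<longleftrightarrow> tclosed S \<and> proper S \<and> \<not> contains_O S \<and>
     (\<forall>t. normal t \<longrightarrow> typing [tO] t S \<longrightarrow> 0 \<notin> fv t)"

end

theory Submission
  imports Defs
begin

text \<open>By the adequacy lemma every term of type A in any context is, after
  substituting realizers for its variables, a realizer of A. Interpreting the constant O
  as the set of all terms (which is saturated) and substituting the variable \<alpha> for
  itself, a term t with \<alpha>:O \<turnstile> t : A lies in |A| whenever O does not occur in A.
  As A is a data type, t \<beta>-reduces to a closed term; a normal t only reduces to itself,
  so t is closed and \<alpha> does not occur in it.\<close>

primrec psubst :: "lterm \<Rightarrow> (nat \<Rightarrow> lterm) \<Rightarrow> lterm" where
  "psubst (Var i) \<sigma> = \<sigma> i"
| "psubst (App s t) \<sigma> = App (psubst s \<sigma>) (psubst t \<sigma>)"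
| "psubst (Abs s) \<sigma> = Abs (psubst s (case_nat (Var 0) (\<lambda>i. lift (\<sigma> i) 0)))"

lemma psubst_Var: "psubst s Var = s"
proof (induction s)
  case (Abs s)
  have "case_nat (Var 0) (\<lambda>i. lift (Var i) 0) = Var"
    by (rule ext) (simp split: nat.split)
  then show ?case using Abs by simp
qed auto

lemma subst_lift: "subst (lift u k) k v = u"
  by (induction u arbitrary: k v) auto

lemma lift_lift: "i \<le> j \<Longrightarrow> lift (lift v j) i = lift (lift v i) (Suc j)"
  by (induction v arbitrary: i j) auto

lemma subst_lift_comm:
  "j \<le> k \<Longrightarrow> subst (lift u j) (Suc k) (lift v j) = lift (subst u k v) j"
proof (induction u arbitrary: j k v)
  case (Abs u)
  have "lift (lift v j) 0 = lift (lift v 0) (Suc j)" by (simp add: lift_lift)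
  then show ?case using Abs.IH[of "Suc j" "Suc k" "lift v 0"] Abs.prems by simp
qed auto

lemma subst_psubst: "subst (psubst s \<sigma>) k v = psubst s (\<lambda>i. subst (\<sigma> i) k v)"
proof (induction s arbitrary: \<sigma> k v)
  case (Abs s)
  have "(\<lambda>i. subst (case_nat (Var 0) (\<lambda>i. lift (\<sigma> i) 0) i) (Suc k) (lift v 0))
        = case_nat (Var 0) (\<lambda>i. lift (subst (\<sigma> i) k v) 0)"
    by (rule ext) (simp add: subst_lift_comm[of 0, simplified] split: nat.split)
  then show ?case using Abs by simp
qed auto

lemma whead_psubst_Abs: "whead (App (psubst (Abs t) \<sigma>) v) (psubst t (case_nat v \<sigma>))"
proof -
  have "(\<lambda>i. subst (case_nat (Var 0) (\<lambda>i. lift (\<sigma> i) 0) i) 0 v) = case_nat v \<sigma>"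
    by (rule ext) (simp add: subst_lift split: nat.split)
  then show ?thesis
    unfolding whead_def using whead1.head[of "psubst t (case_nat (Var 0) (\<lambda>i. lift (\<sigma> i) 0))" v]
    by (simp add: subst_psubst)
qed

lemma whead_App: "whead t u \<Longrightarrow> whead (App t s) (App u s)"
  unfolding whead_def
  by (induction rule: rtranclp_induct) (auto intro: rtranclp.rtrancl_into_rtrancl whead1.app)

lemma saturated_UNIV: "saturated UNIV"
  by (simp add: saturated_def)

lemma saturated_arrow_set: "saturated G' \<Longrightarrow> saturated (arrow_set G G')"
  unfolding saturated_def arrow_set_def using whead_App by blast

lemma is_interp_case_nat: "is_interp Iv Ic \<Longrightarrow> saturated G \<Longrightarrow> is_interp (case_nat G Iv) Ic"
  unfolding is_interp_def by (auto split: nat.split)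

lemma saturated_sem: "is_interp Iv Ic \<Longrightarrow> saturated (sem Iv Ic A)"
proof (induction A arbitrary: Iv)
  case (All A)
  then have "\<And>G. saturated G \<Longrightarrow> saturated (sem (case_nat G Iv) Ic A)"
    by (blast intro: is_interp_case_nat)
  then show ?case unfolding saturated_def sem.simps by blast
qed (auto simp: is_interp_def saturated_arrow_set)

lemma sem_tlift: "sem Iv Ic (tlift A k) = sem (\<lambda>i. if i < k then Iv i else Iv (Suc i)) Ic A"
proof (induction A arbitrary: Iv k)
  case (All A)
  have "\<And>G. (\<lambda>i. if i < Suc k then case_nat G Iv i else case_nat G Iv (Suc i))
     = case_nat G (\<lambda>i. if i < k then Iv i else Iv (Suc i))"
    by (rule ext) (simp split: nat.split)
  then show ?case using All by simp
qed auto

lemma sem_tlift0: "sem (case_nat G Iv) Ic (tlift A 0) = sem Iv Ic A"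
  by (simp add: sem_tlift)

lemma sem_tsubst: "sem Iv Ic (tsubst A k C) =
  sem (\<lambda>i. if i < k then Iv i else if i = k then sem Iv Ic C else Iv (i - 1)) Ic A"
proof (induction A arbitrary: Iv k C)
  case (All A)
  have "\<And>G. (\<lambda>i. if i < Suc k then case_nat G Iv i
              else if i = Suc k then sem (case_nat G Iv) Ic (tlift C 0) else case_nat G Iv (i - 1))
     = case_nat G (\<lambda>i. if i < k then Iv i else if i = k then sem Iv Ic C else Iv (i - 1))"
    by (rule ext) (auto simp: sem_tlift0 split: nat.split)
  then show ?case using All by simp
qed auto

lemma sem_tsubst0: "sem Iv Ic (tsubst A 0 C) = sem (case_nat (sem Iv Ic C) Iv) Ic A"
proof -
  have "(\<lambda>i. if i < 0 then Iv i else if i = 0 then sem Iv Ic C else Iv (i - 1))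
        = case_nat (sem Iv Ic C) Iv"
    by (rule ext) (simp split: nat.split)
  then show ?thesis by (simp add: sem_tsubst)
qed

lemma sem_fun_upd_const: "\<not> has_const c A \<Longrightarrow> sem Iv (Ic(c := X)) A = sem Iv Ic A"
  by (induction A arbitrary: Iv) auto

lemma psubst_Abs_in_arrow_set:
  assumes "saturated G'" and "\<And>v. v \<in> G \<Longrightarrow> psubst t (case_nat v \<sigma>) \<in> G'"
  shows "psubst (Abs t) \<sigma> \<in> arrow_set G G'"
  using assms whead_psubst_Abs unfolding arrow_set_def saturated_def by blast

lemma adequacy:
  assumes "typing \<Gamma> t A" and "is_interp Iv Ic"
    and "\<forall>i<length \<Gamma>. \<sigma> i \<in> sem Iv Ic (\<Gamma> ! i)"
  shows "psubst t \<sigma> \<in> sem Iv Ic A"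
  using assms
proof (induction arbitrary: Iv \<sigma> rule: typing.induct)
  case (arr_i B \<Gamma> t C)
  have "\<And>v. v \<in> sem Iv Ic B \<Longrightarrow> psubst t (case_nat v \<sigma>) \<in> sem Iv Ic C"
    using arr_i.prems by (intro arr_i.IH) (auto split: nat.split)
  with saturated_sem[OF arr_i.prems(1)] show ?case
    unfolding sem.simps by (rule psubst_Abs_in_arrow_set)
next
  case (arr_e \<Gamma> u B C v)
  then show ?case by (auto simp: arrow_set_def)
next
  case (all_i \<Gamma> t A)
  have "\<And>G. saturated G \<Longrightarrow> psubst t \<sigma> \<in> sem (case_nat G Iv) Ic A"
    using all_i.prems by (intro all_i.IH) (auto simp: is_interp_case_nat sem_tlift0)
  then show ?case by auto
next
  case (all_e \<Gamma> t A C)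
  then have "psubst t \<sigma> \<in> sem Iv Ic (All A)" by blast
  then show ?case
    using saturated_sem[OF all_e.prems(1)] by (auto simp: sem_tsubst0)
qed simp

lemma typing_const_in_sem_all:
  assumes "typing [TConst c] t A" and "\<not> has_const c A"
  shows "t \<in> sem_all A"
  unfolding sem_all_def
proof clarify
  fix Iv Ic assume "is_interp Iv Ic"
  then have "is_interp Iv (Ic(c := UNIV))"
    using saturated_UNIV unfolding is_interp_def by auto
  then have "psubst t Var \<in> sem Iv (Ic(c := UNIV)) A"
    using assms(1) by (intro adequacy) auto
  then show "t \<in> sem Iv Ic A"
    using assms(2) by (simp add: psubst_Var sem_fun_upd_const)
qed

lemma normal_not_beta1: "beta1 s s' \<Longrightarrow> \<not> normal s"
  by (induction rule: beta1.induct) (auto split: lterm.splits)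

lemma normal_beta_red: "beta_red s u \<Longrightarrow> normal s \<Longrightarrow> u = s"
  unfolding beta_red_def
  by (induction rule: converse_rtranclp_induct) (auto dest: normal_not_beta1)

theorem theorem2p1p8:
  assumes "proper A" and "tclosed A" and "\<not> contains_O A"
    and "data_type A"
  shows "output_type A"
  unfolding output_type_def
proof (intro conjI allI impI)
  fix t assume normal: "normal t" and typed: "typing [tO] t A"
  have "t \<in> sem_all A"
    using typed assms(3) unfolding tO_def contains_O_def by (rule typing_const_in_sem_all)
  then obtain u where "beta_red t u" and "closed_term u"
    using assms(4) unfolding data_type_def by blast
  then show "0 \<notin> fv t"
    using normal normal_beta_red by (auto simp: closed_term_def)
qed (use assms in auto)

end
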